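(* Let $G=(V,E,w)$ be a strongly connected directed weighted graph, let $S_1\subseteq S_2\subseteq V$, and let $0\le\delta_1\le\delta_2$. Then $\operatorname{fp}(G^{S_1},\delta_1)\le\operatorname{fp}(G^{S_2},\delta_2)$.
   Context: Positional Voter model. A graph $G=(V,E,w)$ has node set $V$ with $|V|=n$, edge set $E\subseteq V\times V$ and weights $w\colon E\to\mathbb{R}_{>0}$; $\operatorname{in}(u)=\{v\in V:(v,u)\in E\}$. A configuration is a set $X\subseteq V$ (the nodes carrying the novel trait $A$). Given a biased set $S\subseteq V$ and bias $\delta\ge 0$, define $f^S_X(v\mid u)=1+\delta$ if $v\in X$ and $u\in S$, and $1$ otherwise. The process $(\mathcal{X}_t)_{t\ge0}$: given $\mathcal{X}_t=X$, a node $u$ is chosen uniformly at random from $V$, then $v\in\operatorname{in}(u)$ is chosen with probability $\frac{f^S_X(v\mid u)\,w(v,u)}{\sum_{x\in\operatorname{in}(u)} f^S_X(x\mid u)\,w(x,u)}$, and $\mathcal{X}_{t+1}=X\cup\{u\}$ if $v\in X$, $\mathcal{X}_{t+1}=X\setminus\{u\}$ otherwise. Define $\operatorname{fp}(G^S,\delta,X)=\mathbb{P}[\exists t\ge0:\mathcal{X}_t=V\mid\mathcal{X}_0=X]$ and $\operatorname{fp}(G^S,\delta)=\frac1n\sum_{u\in V}\operatorname{fp}(G^S,\delta,\{u\})$. *)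

theory Defs
  imports Complex_Main
begin

definition weighted_graph :: "'a set \<Rightarrow> ('a \<times> 'a) set \<Rightarrow> ('a \<times> 'a \<Rightarrow> real) \<Rightarrow> bool" where
  "weighted_graph V E w \<longleftrightarrow> finite V \<and> E \<subseteq> V \<times> V \<and> (\<forall>e\<in>E. w e > 0)"

definition strongly_connected :: "'a set \<Rightarrow> ('a \<times> 'a) set \<Rightarrow> bool" where
  "strongly_connected V E \<longleftrightarrow> (\<forall>u\<in>V. \<forall>v\<in>V. (u, v) \<in> E\<^sup>*)"

definition in_nbrs :: "('a \<times> 'a) set \<Rightarrow> 'a \<Rightarrow> 'a set" where
  "in_nbrs E u = {v. (v, u) \<in> E}"

definition fbias :: "'a set \<Rightarrow> real \<Rightarrow> 'a set \<Rightarrow> 'a \<Rightarrow> 'a \<Rightarrow> real" where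
  "fbias S \<delta> X v u = (if v \<in> X \<and> u \<in> S then 1 + \<delta> else 1)"

text \<open>Probability that node v is chosen as the one u copies from (configuration X).\<close>
definition copy_prob :: "('a \<times> 'a) set \<Rightarrow> ('a \<times> 'a \<Rightarrow> real) \<Rightarrow> 'a set \<Rightarrow> real \<Rightarrow> 'a set \<Rightarrow> 'a \<Rightarrow> 'a \<Rightarrow> real" where
  "copy_prob E w S \<delta> X u v =
     fbias S \<delta> X v u * w (v, u) / (\<Sum>x\<in>in_nbrs E u. fbias S \<delta> X x u * w (x, u))"

text \<open>hit_prob V E w S \<delta> T X = P[exists t \<le> T. X_t = V | X_0 = X], by one-step analysis.
  (If in(u) is empty -- only possible for |V| = 1 in a strongly connected graph --
  the chosen node keeps its trait.)\<close>
fun hit_prob :: "'a set \<Rightarrow> ('a \<times> 'a) set \<Rightarrow> ('a \<times> 'a \<Rightarrow> real) \<Rightarrow> 'a set \<Rightarrow> real \<Rightarrow> nat \<Rightarrow> 'a set \<Rightarrow> real" where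
  "hit_prob V E w S \<delta> 0 X = (if X = V then 1 else 0)"
| "hit_prob V E w S \<delta> (Suc T) X =
     (if X = V then 1 else
      (1 / real (card V)) * (\<Sum>u\<in>V.
         (if in_nbrs E u = {} then hit_prob V E w S \<delta> T X
          else (\<Sum>v\<in>in_nbrs E u.
                  copy_prob E w S \<delta> X u v *
                  (if v \<in> X then hit_prob V E w S \<delta> T (insert u X)
                   else hit_prob V E w S \<delta> T (X - {u}))))))"

text \<open>fp(G^S, \<delta>, X) = P[exists t. X_t = V] = sup over T of P[exists t \<le> T. X_t = V]
  (continuity of probability along the increasing events).\<close>
definition fp_from :: "'a set \<Rightarrow> ('a \<times> 'a) set \<Rightarrow> ('a \<times> 'a \<Rightarrow> real) \<Rightarrow> 'a set \<Rightarrow> real \<Rightarrow> 'a set \<Rightarrow> real" where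
  "fp_from V E w S \<delta> X = (SUP T. hit_prob V E w S \<delta> T X)"

definition fp :: "'a set \<Rightarrow> ('a \<times> 'a) set \<Rightarrow> ('a \<times> 'a \<Rightarrow> real) \<Rightarrow> 'a set \<Rightarrow> real \<Rightarrow> real" where
  "fp V E w S \<delta> = (1 / real (card V)) * (\<Sum>u\<in>V. fp_from V E w S \<delta> {u})"

end

theory Submission
  imports Defs
begin

text \<open>One-step analysis: given the updated node u, the configuration gains u with the
  probability that u copies from a neighbour carrying A, i.e. the share of A among the biased
  in-weights of u. That share grows with the biased set, the bias and the configuration, so by
  induction on the horizon T the probability of fixation within T steps is monotone in all
  three jointly. Monotonicity in the configuration is needed inside the induction step itself:
  a larger adoption probability shifts mass from the successor X - {u} to insert u X.
  Taking suprema over T gives the theorem.\<close>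

lemma share_mono:
  fixes x x' y y' :: real
  assumes "0 \<le> x" "x \<le> x'" "0 \<le> y'" "y' \<le> y"
  shows "x / (x + y) \<le> x' / (x' + y')"
proof (cases "x = 0")
  case True
  with assms show ?thesis by simp
next
  case False
  with assms have "0 < x + y" "0 < x' + y'" by auto
  moreover have "x * y' \<le> x' * y" using assms by (intro mult_mono) auto
  ultimately show ?thesis by (simp add: divide_simps algebra_simps)
qed

lemma convex_comb_mono:
  fixes p p' a a' b b' :: real
  assumes "p \<le> p'" "0 \<le> p'" "p' \<le> 1" "b \<le> a" "a \<le> a'" "b \<le> b'"
  shows "p * a + (1 - p) * b \<le> p' * a' + (1 - p') * b'"
proof -
  have "p * a + (1 - p) * b = b + p * (a - b)" by (simp add: algebra_simps)
  also have "\<dots> \<le> b + p' * (a - b)" using assms by (intro add_left_mono mult_right_mono) auto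
  also have "\<dots> = p' * a + (1 - p') * b" by (simp add: algebra_simps)
  also have "\<dots> \<le> p' * a' + (1 - p') * b'" using assms by (intro add_mono mult_left_mono) auto
  finally show ?thesis .
qed

lemma fbias_mono:
  assumes "S \<subseteq> S'" "0 \<le> \<delta>'" "\<delta> \<le> \<delta>'" "X \<subseteq> X'"
  shows "fbias S \<delta> X v u \<le> fbias S' \<delta>' X' v u"
  using assms by (auto simp: fbias_def)

lemma finite_in_nbrs: "weighted_graph V E w \<Longrightarrow> finite (in_nbrs E u)"
  unfolding weighted_graph_def in_nbrs_def by (auto intro: finite_subset[of _ V])

lemma in_nbrs_weight_pos: "weighted_graph V E w \<Longrightarrow> v \<in> in_nbrs E u \<Longrightarrow> 0 < w (v, u)"
  by (auto simp: weighted_graph_def in_nbrs_def)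

definition adopt_prob :: "('a \<times> 'a) set \<Rightarrow> ('a \<times> 'a \<Rightarrow> real) \<Rightarrow> 'a set \<Rightarrow> real \<Rightarrow> 'a set \<Rightarrow> 'a \<Rightarrow> real" where
  "adopt_prob E w S \<delta> X u = (\<Sum>v\<in>in_nbrs E u \<inter> X. copy_prob E w S \<delta> X u v)"

lemma adopt_prob_eq_share:
  assumes "weighted_graph V E w"
  shows "adopt_prob E w S \<delta> X u =
    (\<Sum>v\<in>in_nbrs E u \<inter> X. fbias S \<delta> X v u * w (v, u)) /
    ((\<Sum>v\<in>in_nbrs E u \<inter> X. fbias S \<delta> X v u * w (v, u)) + (\<Sum>v\<in>in_nbrs E u - X. w (v, u)))"
proof -
  let ?f = "\<lambda>v. fbias S \<delta> X v u * w (v, u)"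
  have "(\<Sum>v\<in>in_nbrs E u. ?f v) = (\<Sum>v\<in>in_nbrs E u \<inter> X. ?f v) + (\<Sum>v\<in>in_nbrs E u - X. ?f v)"
    using finite_in_nbrs[OF assms] by (rule sum.Int_Diff)
  moreover have "(\<Sum>v\<in>in_nbrs E u - X. ?f v) = (\<Sum>v\<in>in_nbrs E u - X. w (v, u))"
    by (simp add: fbias_def)
  ultimately show ?thesis
    by (simp add: adopt_prob_def copy_prob_def sum_divide_distrib[symmetric])
qed

lemma adopt_prob_mono:
  assumes "weighted_graph V E w" "S \<subseteq> S'" "0 \<le> \<delta>" "\<delta> \<le> \<delta>'" "X \<subseteq> X'"
  shows "adopt_prob E w S \<delta> X u \<le> adopt_prob E w S' \<delta>' X' u"
  unfolding adopt_prob_eq_share[OF assms(1)]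
proof (rule share_mono)
  have fin: "finite (in_nbrs E u)" using finite_in_nbrs[OF assms(1)] .
  have w: "v \<in> in_nbrs E u \<Longrightarrow> 0 \<le> w (v, u)" for v
    using in_nbrs_weight_pos[OF assms(1)] by (simp add: less_imp_le)
  show "0 \<le> (\<Sum>v\<in>in_nbrs E u \<inter> X. fbias S \<delta> X v u * w (v, u))"
    using w assms(3) by (intro sum_nonneg mult_nonneg_nonneg) (auto simp: fbias_def)
  have "(\<Sum>v\<in>in_nbrs E u \<inter> X. fbias S \<delta> X v u * w (v, u))
      \<le> (\<Sum>v\<in>in_nbrs E u \<inter> X. fbias S' \<delta>' X' v u * w (v, u))"
    using w assms by (intro sum_mono mult_right_mono fbias_mono) auto
  also have "\<dots> \<le> (\<Sum>v\<in>in_nbrs E u \<inter> X'. fbias S' \<delta>' X' v u * w (v, u))"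
    using w fin assms by (intro sum_mono2 mult_nonneg_nonneg) (auto simp: fbias_def)
  finally show "(\<Sum>v\<in>in_nbrs E u \<inter> X. fbias S \<delta> X v u * w (v, u))
      \<le> (\<Sum>v\<in>in_nbrs E u \<inter> X'. fbias S' \<delta>' X' v u * w (v, u))" .
  show "0 \<le> (\<Sum>v\<in>in_nbrs E u - X'. w (v, u))"
    using w by (intro sum_nonneg) auto
  show "(\<Sum>v\<in>in_nbrs E u - X'. w (v, u)) \<le> (\<Sum>v\<in>in_nbrs E u - X. w (v, u))"
    using w fin assms(5) by (intro sum_mono2) auto
qed

lemma adopt_prob_bounds:
  assumes "weighted_graph V E w" "0 \<le> \<delta>"
  shows "0 \<le> adopt_prob E w S \<delta> X u" "adopt_prob E w S \<delta> X u \<le> 1"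
proof -
  let ?a = "\<Sum>v\<in>in_nbrs E u \<inter> X. fbias S \<delta> X v u * w (v, u)"
  let ?b = "\<Sum>v\<in>in_nbrs E u - X. w (v, u)"
  have w: "v \<in> in_nbrs E u \<Longrightarrow> 0 \<le> w (v, u)" for v
    using in_nbrs_weight_pos[OF assms(1)] by (simp add: less_imp_le)
  have "0 \<le> ?a" using w assms(2) by (intro sum_nonneg mult_nonneg_nonneg) (auto simp: fbias_def)
  moreover have "0 \<le> ?b" using w by (intro sum_nonneg) auto
  ultimately show "0 \<le> adopt_prob E w S \<delta> X u" "adopt_prob E w S \<delta> X u \<le> 1"
    unfolding adopt_prob_eq_share[OF assms(1)] by (auto simp: divide_simps)
qed

lemma sum_copy_prob:
  assumes "weighted_graph V E w" "0 \<le> \<delta>" "in_nbrs E u \<noteq> {}"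
  shows "(\<Sum>v\<in>in_nbrs E u. copy_prob E w S \<delta> X u v) = 1"
proof -
  have "0 < (\<Sum>v\<in>in_nbrs E u. fbias S \<delta> X v u * w (v, u))"
    using assms finite_in_nbrs[OF assms(1)] in_nbrs_weight_pos[OF assms(1)]
    by (intro sum_pos mult_pos_pos) (auto simp: fbias_def)
  then show ?thesis by (simp add: copy_prob_def sum_divide_distrib[symmetric])
qed

lemma copy_expectation:
  assumes "weighted_graph V E w" "0 \<le> \<delta>" "in_nbrs E u \<noteq> {}"
  shows "(\<Sum>v\<in>in_nbrs E u. copy_prob E w S \<delta> X u v * (if v \<in> X then a else b)) =
    adopt_prob E w S \<delta> X u * a + (1 - adopt_prob E w S \<delta> X u) * b"
proof -
  let ?c = "copy_prob E w S \<delta> X u" and ?N = "in_nbrs E u"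
  have fin: "finite ?N" using finite_in_nbrs[OF assms(1)] .
  have "(\<Sum>v\<in>?N. ?c v * (if v \<in> X then a else b))
      = (\<Sum>v\<in>?N \<inter> X. ?c v * (if v \<in> X then a else b)) + (\<Sum>v\<in>?N - X. ?c v * (if v \<in> X then a else b))"
    using fin by (rule sum.Int_Diff)
  also have "\<dots> = (\<Sum>v\<in>?N \<inter> X. ?c v) * a + (\<Sum>v\<in>?N - X. ?c v) * b"
    by (simp add: sum_distrib_right)
  also have "(\<Sum>v\<in>?N - X. ?c v) = 1 - (\<Sum>v\<in>?N \<inter> X. ?c v)"
    using sum.Int_Diff[OF fin, of ?c X] sum_copy_prob[OF assms] by simp
  finally show ?thesis by (simp add: adopt_prob_def)
qed

lemma hit_prob_Suc_adopt:
  assumes "weighted_graph V E w" "0 \<le> \<delta>" "X \<noteq> V"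
  shows "hit_prob V E w S \<delta> (Suc T) X = (1 / real (card V)) * (\<Sum>u\<in>V.
      if in_nbrs E u = {} then hit_prob V E w S \<delta> T X
      else adopt_prob E w S \<delta> X u * hit_prob V E w S \<delta> T (insert u X)
        + (1 - adopt_prob E w S \<delta> X u) * hit_prob V E w S \<delta> T (X - {u}))"
proof -
  have "(\<Sum>v\<in>in_nbrs E u. copy_prob E w S \<delta> X u v *
          (if v \<in> X then hit_prob V E w S \<delta> T (insert u X) else hit_prob V E w S \<delta> T (X - {u})))
      = adopt_prob E w S \<delta> X u * hit_prob V E w S \<delta> T (insert u X)
        + (1 - adopt_prob E w S \<delta> X u) * hit_prob V E w S \<delta> T (X - {u})"
    if "in_nbrs E u \<noteq> {}" for u
    using copy_expectation[OF assms(1,2) that] .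
  with assms(3) show ?thesis by (auto intro!: sum.cong cong: if_cong)
qed

lemma hit_prob_le_1:
  assumes "weighted_graph V E w" "0 \<le> \<delta>"
  shows "hit_prob V E w S \<delta> T X \<le> 1"
proof (induction T arbitrary: X)
  case 0
  show ?case by simp
next
  case (Suc T)
  show ?case
  proof (cases "X = V")
    case False
    let ?p = "adopt_prob E w S \<delta> X"
    have "(\<Sum>u\<in>V. if in_nbrs E u = {} then hit_prob V E w S \<delta> T X
        else ?p u * hit_prob V E w S \<delta> T (insert u X) + (1 - ?p u) * hit_prob V E w S \<delta> T (X - {u}))
      \<le> (\<Sum>u\<in>V. 1)"
      using Suc.IH adopt_prob_bounds[OF assms] by (intro sum_mono) (auto intro: convex_bound_le)
    then show ?thesis
      unfolding hit_prob_Suc_adopt[OF assms False] by (cases "card V = 0") (auto simp: divide_simps)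
  qed simp
qed

lemma hit_prob_mono:
  assumes "weighted_graph V E w" "S \<subseteq> S'" "0 \<le> \<delta>" "\<delta> \<le> \<delta>'" "X \<subseteq> X'" "X' \<subseteq> V"
  shows "hit_prob V E w S \<delta> T X \<le> hit_prob V E w S' \<delta>' T X'"
  using assms(2-)
proof (induction T arbitrary: S S' \<delta> \<delta>' X X')
  case 0
  then show ?case by auto
next
  case (Suc T)
  show ?case
  proof (cases "X' = V")
    case True
    then show ?thesis using hit_prob_le_1[OF assms(1) \<open>0 \<le> \<delta>\<close>, of S "Suc T" X] by simp
  next
    case False
    with Suc.prems have "X \<noteq> V" by auto
    have "0 \<le> \<delta>'" using Suc.prems by simp
    let ?h = "hit_prob V E w S \<delta> T" and ?h' = "hit_prob V E w S' \<delta>' T"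
    let ?p = "adopt_prob E w S \<delta> X" and ?p' = "adopt_prob E w S' \<delta>' X'"
    have "?p u * ?h (insert u X) + (1 - ?p u) * ?h (X - {u})
        \<le> ?p' u * ?h' (insert u X') + (1 - ?p' u) * ?h' (X' - {u})" if "u \<in> V" for u
    proof (rule convex_comb_mono)
      show "?p u \<le> ?p' u" using adopt_prob_mono[OF assms(1)] Suc.prems by blast
      show "0 \<le> ?p' u" "?p' u \<le> 1" using adopt_prob_bounds[OF assms(1) \<open>0 \<le> \<delta>'\<close>] by auto
      show "?h (X - {u}) \<le> ?h (insert u X)"
        using Suc.IH[of S S \<delta> \<delta> "X - {u}" "insert u X"] Suc.prems that by blast
      show "?h (insert u X) \<le> ?h' (insert u X')"
        using Suc.IH[of S S' \<delta> \<delta>' "insert u X" "insert u X'"] Suc.prems that by blast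
      show "?h (X - {u}) \<le> ?h' (X' - {u})"
        using Suc.IH[of S S' \<delta> \<delta>' "X - {u}" "X' - {u}"] Suc.prems that by blast
    qed
    with Suc.IH[OF Suc.prems] have "(\<Sum>u\<in>V. if in_nbrs E u = {} then ?h X
          else ?p u * ?h (insert u X) + (1 - ?p u) * ?h (X - {u}))
        \<le> (\<Sum>u\<in>V. if in_nbrs E u = {} then ?h' X'
          else ?p' u * ?h' (insert u X') + (1 - ?p' u) * ?h' (X' - {u}))"
      by (intro sum_mono) auto
    then show ?thesis
      unfolding hit_prob_Suc_adopt[OF assms(1) \<open>0 \<le> \<delta>\<close> \<open>X \<noteq> V\<close>]
        hit_prob_Suc_adopt[OF assms(1) \<open>0 \<le> \<delta>'\<close> False]
      by (intro mult_left_mono) auto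
  qed
qed

theorem mainTheorem6:
  fixes V :: "'a set" and E :: "('a \<times> 'a) set" and w :: "'a \<times> 'a \<Rightarrow> real"
    and S1 S2 :: "'a set" and \<delta>1 \<delta>2 :: real
  assumes "weighted_graph V E w"
    and "strongly_connected V E"
    and "S1 \<subseteq> S2" and "S2 \<subseteq> V"
    and "0 \<le> \<delta>1" and "\<delta>1 \<le> \<delta>2"
  shows "fp V E w S1 \<delta>1 \<le> fp V E w S2 \<delta>2"
proof -
  have "fp_from V E w S1 \<delta>1 {u} \<le> fp_from V E w S2 \<delta>2 {u}" if "u \<in> V" for u
    unfolding fp_from_def
  proof (rule cSUP_mono)
    show "bdd_above (range (\<lambda>T. hit_prob V E w S2 \<delta>2 T {u}))"
      using hit_prob_le_1[OF assms(1)] assms(5,6) by (intro bdd_aboveI[of _ 1]) auto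
    show "\<exists>T'\<in>UNIV. hit_prob V E w S1 \<delta>1 T {u} \<le> hit_prob V E w S2 \<delta>2 T' {u}" for T
      using hit_prob_mono[OF assms(1,3,5,6)] that by blast
  qed simp
  then show ?thesis
    unfolding fp_def by (intro mult_left_mono sum_mono) auto
qed

end
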